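(* Let $\Delta^3_6$ be the pure $3$-dimensional simplicial complex on the $12$ vertices $\{\pm1,\pm2,\dots,\pm6\}$ whose $48$ facets are the following $24$ four-element sets together with their antipodal images (the image of a set $F$ under $x\mapsto -x$): $\{1,2,5,6\}$, $\{-1,-2,5,6\}$, $\{2,3,5,6\}$, $\{-2,-3,5,6\}$, $\{3,4,5,6\}$, $\{-3,-4,5,6\}$, $\{1,-4,5,6\}$, $\{1,-4,-5,6\}$, $\{1,-4,-5,-6\}$, $\{1,2,3,5\}$, $\{-1,-2,3,5\}$, $\{1,-2,3,5\}$, $\{1,2,4,6\}$, $\{-1,-2,4,6\}$, $\{2,3,4,6\}$, $\{-2,-3,4,6\}$, $\{1,-3,4,6\}$, $\{2,3,4,-5\}$, $\{-1,2,4,-5\}$, $\{3,4,5,-6\}$, $\{-1,3,5,-6\}$, $\{1,2,-3,4\}$, $\{1,2,3,-4\}$, $\{1,-2,3,-4\}$. Then $\Delta^3_6$ (which is a simplicial $3$-sphere) is not polytopal: there is no simplicial convex $4$-polytope whose boundary complex is combinatorially isomorphic to $\Delta^3_6$.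
   Context: This $\Delta^3_6$ is a member of Jockusch's family of centrally symmetric simplicial $3$-spheres. A simplicial $(d-1)$-sphere is called polytopal if it is isomorphic to the boundary complex of a simplicial convex $d$-polytope; here $d=4$. *)

theory Defs
  imports "HOL-Analysis.Analysis"
begin

definition Delta_base :: "int set set" where
  "Delta_base = {
     {1,2,5,6}, {-1,-2,5,6}, {2,3,5,6}, {-2,-3,5,6}, {3,4,5,6}, {-3,-4,5,6},
     {1,-4,5,6}, {1,-4,-5,6}, {1,-4,-5,-6}, {1,2,3,5}, {-1,-2,3,5}, {1,-2,3,5},
     {1,2,4,6}, {-1,-2,4,6}, {2,3,4,6}, {-2,-3,4,6}, {1,-3,4,6}, {2,3,4,-5},
     {-1,2,4,-5}, {3,4,5,-6}, {-1,3,5,-6}, {1,2,-3,4}, {1,2,3,-4}, {1,-2,3,-4}}"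

definition Delta_facets :: "int set set" where
  "Delta_facets = Delta_base \<union> (\<lambda>F. uminus ` F) ` Delta_base"

definition Delta_vertices :: "int set" where
  "Delta_vertices = {-6..6} - {0}"

definition Delta_faces :: "int set set" where
  "Delta_faces = {S. \<exists>F\<in>Delta_facets. S \<subseteq> F}"

definition simplicial_polytope :: "'a::euclidean_space set \<Rightarrow> bool" where
  "simplicial_polytope P \<longleftrightarrow> polytope P \<and> (\<forall>F. F facet_of P \<longrightarrow> (\<exists>n. n simplex F))"

definition boundary_complex_iso :: "'b set \<Rightarrow> 'b set set \<Rightarrow> 'a::euclidean_space set \<Rightarrow> bool" where
  "boundary_complex_iso V K P \<longleftrightarrow>
     (\<exists>f. bij_betw f V {v. v extreme_point_of P} \<and>
          (\<forall>S. S \<subseteq> V \<longrightarrow>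
               (S \<in> K \<longleftrightarrow> (\<exists>F. F face_of P \<and> F \<noteq> P \<and> f ` S = {v. v extreme_point_of F}))))"

end

theory Submission
  imports Defs
begin

(* Suppose a simplicial 4-polytope P realizes Delta^3_6, its vertex f i corresponding to i, and
   write [a b c d e] for det (f b - f a, f c - f a, f d - f a, f e - f a).
   These brackets are alternating and satisfy the three-term Grassmann-Pluecker relations.
   Every facet F of Delta^3_6 spans a supporting hyperplane of P with all other vertices strictly
   on one side, so [F j] and [F k] have the same nonzero sign for all j, k outside F.
   Normalizing [1 2 3 5 6] > 0, these facet conditions and a few Grassmann-Pluecker relations
   force the signs of further brackets until one relation has all three terms of the same
   strict sign, which is impossible. *)

lemma det_4:
  "det (A::'a::comm_ring_1^4^4) =
    A$1$1 * (A$2$2 * (A$3$3 * A$4$4 - A$3$4 * A$4$3) - A$2$3 * (A$3$2 * A$4$4 - A$3$4 * A$4$2) + A$2$4 * (A$3$2 * A$4$3 - A$3$3 * A$4$2))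
  - A$1$2 * (A$2$1 * (A$3$3 * A$4$4 - A$3$4 * A$4$3) - A$2$3 * (A$3$1 * A$4$4 - A$3$4 * A$4$1) + A$2$4 * (A$3$1 * A$4$3 - A$3$3 * A$4$1))
  + A$1$3 * (A$2$1 * (A$3$2 * A$4$4 - A$3$4 * A$4$2) - A$2$2 * (A$3$1 * A$4$4 - A$3$4 * A$4$1) + A$2$4 * (A$3$1 * A$4$2 - A$3$2 * A$4$1))
  - A$1$4 * (A$2$1 * (A$3$2 * A$4$3 - A$3$3 * A$4$2) - A$2$2 * (A$3$1 * A$4$3 - A$3$3 * A$4$1) + A$2$3 * (A$3$1 * A$4$2 - A$3$2 * A$4$1))"
proof -
  have f1: "finite {2::4, 3, 4}" "1 \<notin> {2::4, 3, 4}" by auto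
  have f2: "finite {3::4, 4}" "2 \<notin> {3::4, 4}" by auto
  have f3: "finite {4::4}" "3 \<notin> {4::4}" by auto
  show ?thesis
    unfolding det_def UNIV_4
    unfolding sum_over_permutations_insert[OF f1]
    unfolding sum_over_permutations_insert[OF f2]
    unfolding sum_over_permutations_insert[OF f3]
    unfolding permutes_sing
    by (simp add: sign_swap_id permutation_swap_id sign_compose permutation_compose sign_id swap_id_eq algebra_simps)
qed

lemma vector_4 [simp]:
  "(vector [a, b, c, d] :: ('a::zero)^4) $ 1 = a"
  "(vector [a, b, c, d] :: ('a::zero)^4) $ 2 = b"
  "(vector [a, b, c, d] :: ('a::zero)^4) $ 3 = c"
  "(vector [a, b, c, d] :: ('a::zero)^4) $ 4 = d"
  unfolding vector_def by simp_all

abbreviation det4 :: "'a::comm_ring_1^4 \<Rightarrow> 'a^4 \<Rightarrow> 'a^4 \<Rightarrow> 'a^4 \<Rightarrow> 'a"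
  where "det4 a b c d \<equiv> det (vector [a, b, c, d] :: 'a^4^4)"

lemma det4_linear_last:
  fixes a b c d e :: "real^4"
  shows "det4 a b c (x *\<^sub>R d + y *\<^sub>R e) = x * det4 a b c d + y * det4 a b c e"
  by (simp add: det_4 algebra_simps)

lemma det4_grassmann_pluecker:
  fixes u v a b c d :: "real^4"
  shows "det4 u v a b * det4 u v c d - det4 u v a c * det4 u v b d + det4 u v a d * det4 u v b c = 0"
  unfolding det_4 vector_4 by algebra

definition orient :: "real^4 \<Rightarrow> real^4 \<Rightarrow> real^4 \<Rightarrow> real^4 \<Rightarrow> real^4 \<Rightarrow> real" where
  "orient p q r s t = det4 (q - p) (r - p) (s - p) (t - p)"

lemma orient_swap:
  "orient p q r s t = - orient q p r s t"
  "orient p q r s t = - orient p r q s t"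
  "orient p q r s t = - orient p q s r t"
  "orient p q r s t = - orient p q r t s"
  by (simp_all add: orient_def det_4 algebra_simps)

lemma orient_grassmann_pluecker:
  "orient x y z a b * orient x y z c d - orient x y z a c * orient x y z b d
     + orient x y z a d * orient x y z b c = 0"
  unfolding orient_def by (rule det4_grassmann_pluecker)

lemma orient_affine_last:
  "orient p q r s ((1 - u) *\<^sub>R y + u *\<^sub>R z) = (1 - u) * orient p q r s y + u * orient p q r s z"
proof -
  have "(1 - u) *\<^sub>R y + u *\<^sub>R z - p = (1 - u) *\<^sub>R (y - p) + u *\<^sub>R (z - p)"
    by (simp add: algebra_simps)
  then show ?thesis
    by (simp add: orient_def det4_linear_last)
qed

lemma rows_vector_4:
  "rows (vector [a, b, c, d] :: 'a::zero^4^4) = {a, b, c, d}"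
proof -
  have "(vector [a, b, c, d] :: 'a^4^4) $ i \<in> {a, b, c, d}" for i :: 4
    using exhaust_4[of i] by auto
  then show ?thesis
    by (auto simp: rows_def row_def vec_lambda_eta intro: exI[of _ 1] exI[of _ 2] exI[of _ 3] exI[of _ 4])
qed

lemma orient_nonzero:
  assumes indep: "\<not> affine_dependent {p, q, r, s, t}" and card: "card {p, q, r, s, t} = 5"
  shows "orient p q r s t \<noteq> 0"
proof -
  let ?A = "vector [q - p, r - p, s - p, t - p] :: real^4^4"
  have "card {q, r, s, t} \<le> 4"
    using card_length[of "[q, r, s, t]"] by simp
  then have p: "p \<notin> {q, r, s, t}" and card4: "card {q, r, s, t} = 4"
    using card by (auto simp: card_insert_if split: if_splits)
  have "rows ?A = (\<lambda>x. - p + x) ` {q, r, s, t}"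
    by (simp add: rows_vector_4)
  moreover have "independent ((\<lambda>x. - p + x) ` {q, r, s, t})"
    using indep affine_dependent_iff_dependent[OF p] by simp
  moreover have "card ((\<lambda>x. - p + x) ` {q, r, s, t}) = 4"
    using card4 by (subst card_image) (auto simp: inj_on_def)
  ultimately have "rank ?A = 4"
    by (simp add: row_rank_def dim_eq_card_independent)
  then show ?thesis
    unfolding orient_def by (simp add: det_eq_0_rank)
qed

lemma orient_same_side:
  assumes indep: "\<not> affine_dependent {p1, p2, p3, p4}" and card: "card {p1, p2, p3, p4} = 4"
    and on: "{p1, p2, p3, p4} \<subseteq> {x. a \<bullet> x = b}"
    and y: "a \<bullet> y < b" and z: "a \<bullet> z < b"
  shows "0 < orient p1 p2 p3 p4 y * orient p1 p2 p3 p4 z"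
proof -
  let ?o = "orient p1 p2 p3 p4"
  have nonzero: "?o w \<noteq> 0" if w: "a \<bullet> w < b" for w
  proof -
    have "affine hull {p1, p2, p3, p4} \<subseteq> {x. a \<bullet> x = b}"
      using on by (intro hull_minimal affine_hyperplane)
    then have off_hull: "w \<notin> affine hull {p1, p2, p3, p4}"
      using w by auto
    have insert_w: "{p1, p2, p3, p4, w} = insert w {p1, p2, p3, p4}"
      by blast
    have "\<not> affine_dependent {p1, p2, p3, p4, w}"
      unfolding insert_w using off_hull by (rule affine_independent_insert[OF indep])
    moreover have "w \<notin> {p1, p2, p3, p4}"
      using off_hull by (meson hull_inc)
    then have "card {p1, p2, p3, p4, w} = 5"
      unfolding insert_w using card by simp
    ultimately show ?thesis
      by (rule orient_nonzero)
  qed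
  \<comment> \<open>?o is affine on the segment from y to z, which lies strictly below the hyperplane,
    so a sign change would produce a zero of ?o there.\<close>
  show ?thesis
  proof (rule ccontr)
    assume "\<not> ?thesis"
    then have opposite: "?o y * ?o z < 0"
      using nonzero[OF y] nonzero[OF z] by (simp add: linorder_not_less le_less)
    then have "?o y \<noteq> ?o z"
      by auto
    define u where "u = ?o y / (?o y - ?o z)"
    have u: "0 < u" "u < 1"
      using opposite by (auto simp: u_def mult_less_0_iff field_simps)
    define w where "w = (1 - u) *\<^sub>R y + u *\<^sub>R z"
    have "a \<bullet> w = (1 - u) * (a \<bullet> y) + u * (a \<bullet> z)"
      by (simp add: w_def inner_add_right)
    also have "\<dots> < (1 - u) * b + u * b"
      using u y z by (intro add_strict_mono mult_strict_left_mono) auto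
    also have "\<dots> = b"
      by (simp add: algebra_simps)
    finally have "?o w \<noteq> 0"
      by (rule nonzero)
    moreover have "?o w = (1 - u) * ?o y + u * ?o z"
      unfolding w_def by (rule orient_affine_last)
    moreover have "(1 - u) * ?o y + u * ?o z = 0"
      using \<open>?o y \<noteq> ?o z\<close> by (simp add: u_def field_simps)
    ultimately show False
      by simp
  qed
qed

locale simplicial_realization =
  fixes P :: "'a::euclidean_space set" and f :: "'v \<Rightarrow> 'a" and V :: "'v set" and Fs :: "'v set set"
  assumes simplicial: "simplicial_polytope P"
    and bij: "bij_betw f V {v. v extreme_point_of P}"
    and faces: "\<And>S. S \<subseteq> V \<Longrightarrow>
      (\<exists>F\<in>Fs. S \<subseteq> F) \<longleftrightarrow> (\<exists>G. G face_of P \<and> G \<noteq> P \<and> f ` S = {v. v extreme_point_of G})"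
    and facets_antichain: "\<And>F F'. F \<in> Fs \<Longrightarrow> F' \<in> Fs \<Longrightarrow> F \<subseteq> F' \<Longrightarrow> F = F'"
    and facets_nonempty: "{} \<notin> Fs"
    and facets_subset: "\<And>F. F \<in> Fs \<Longrightarrow> F \<subseteq> V"
begin

lemma polyhedron: "polyhedron P"
  using simplicial by (simp add: simplicial_polytope_def polytope_imp_polyhedron)

lemma facet_image:
  assumes F: "F \<in> Fs"
  obtains G where "G facet_of P" "f ` F = {v. v extreme_point_of G}"
proof -
  obtain F0 where F0: "F0 face_of P" "F0 \<noteq> P" "f ` F = {v. v extreme_point_of F0}"
    using faces[OF facets_subset[OF F]] F by blast
  have "F0 \<noteq> {}"
    using F0(3) F facets_nonempty by fastforce
  then obtain G where G: "G facet_of P" "F0 \<subseteq> G"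
    using face_of_polyhedron_subset_facet[OF polyhedron F0(1)] F0(2) by blast
  then have GP: "G face_of P" "G \<noteq> P"
    by (auto simp: facet_of_imp_face_of)
  define S where "S = {i \<in> V. f i extreme_point_of G}"
  have S: "f ` S = {v. v extreme_point_of G}"
    using bij extreme_point_of_face[OF GP(1)] by (auto simp: S_def bij_betw_def)
  then obtain F' where F': "F' \<in> Fs" "S \<subseteq> F'"
    using faces[of S] GP by (auto simp: S_def)
  have "F0 face_of G"
    using face_of_subset[OF F0(1) G(2)] GP(1) face_of_imp_subset by blast
  then have "F \<subseteq> S"
    using F0(3) facets_subset[OF F] extreme_point_of_face by (fastforce simp: S_def)
  then have "S = F"
    using facets_antichain[OF F F'(1)] F'(2) by blast
  then show ?thesis
    using that G(1) S by blast
qed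

lemma facet_hyperplane:
  assumes F: "F \<in> Fs"
  obtains a b where "\<forall>i\<in>F. a \<bullet> f i = b" and "\<forall>j\<in>V - F. a \<bullet> f j < b"
    and "\<not> affine_dependent (f ` F)"
proof -
  obtain G where G: "G facet_of P" and FG: "f ` F = {v. v extreme_point_of G}"
    using facet_image[OF F] .
  obtain n where "n simplex G"
    using simplicial G by (auto simp: simplicial_polytope_def)
  then obtain C where C: "\<not> affine_dependent C" "G = convex hull C"
    by (auto simp: simplex_def)
  then have "{v. v extreme_point_of G} = C"
    using extreme_point_of_convex_hull_affine_independent by blast
  then have indep: "\<not> affine_dependent (f ` F)"
    using FG C(1) by simp
  obtain a b where ab: "P \<subseteq> {x. a \<bullet> x \<le> b}" "G = P \<inter> {x. a \<bullet> x = b}"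
    using facet_of_polyhedron[OF polyhedron G] by blast
  have on: "a \<bullet> f i = b" if "i \<in> F" for i
  proof -
    have "f i extreme_point_of G"
      using that FG by blast
    then show ?thesis
      using ab(2) by (auto simp: extreme_point_of_def)
  qed
  have below: "a \<bullet> f j < b" if j: "j \<in> V - F" for j
  proof -
    have fj: "f j extreme_point_of P"
      using bij j by (auto simp: bij_betw_def)
    then have "a \<bullet> f j \<le> b"
      using ab(1) extreme_point_of_def by blast
    moreover have "a \<bullet> f j \<noteq> b"
    proof
      assume "a \<bullet> f j = b"
      then have "f j extreme_point_of G"
        using fj ab(2) extreme_point_of_face facet_of_imp_face_of[OF G] extreme_point_of_def by fastforce
      then obtain i where "i \<in> F" "f j = f i"
        using FG by auto
      then show False
        using j facets_subset[OF F] bij by (auto simp: bij_betw_def inj_on_def)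
    qed
    ultimately show ?thesis
      by simp
  qed
  show ?thesis
    by (rule that[of a b]) (use on below indep in auto)
qed

end

lemma orient_facet_same_side:
  fixes P :: "(real^4) set"
  assumes "simplicial_realization P f V Fs"
    and F: "{i1, i2, i3, i4} \<in> Fs" "card {i1, i2, i3, i4} = 4"
    and "j \<in> V - {i1, i2, i3, i4}" "k \<in> V - {i1, i2, i3, i4}"
  shows "0 < orient (f i1) (f i2) (f i3) (f i4) (f j) * orient (f i1) (f i2) (f i3) (f i4) (f k)"
proof -
  interpret simplicial_realization P f V Fs by fact
  obtain a b where on: "\<forall>i\<in>{i1, i2, i3, i4}. a \<bullet> f i = b"
    and below: "\<forall>j\<in>V - {i1, i2, i3, i4}. a \<bullet> f j < b"
    and indep: "\<not> affine_dependent (f ` {i1, i2, i3, i4})"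
    using facet_hyperplane[OF F(1)] .
  have "inj_on f {i1, i2, i3, i4}"
    using inj_on_subset[OF bij_betw_imp_inj_on[OF bij] facets_subset[OF F(1)]] .
  from card_image[OF this] have "card {f i1, f i2, f i3, f i4} = 4"
    using F(2) by simp
  then show ?thesis
    using indep on below assms(4,5) by (intro orient_same_side) auto
qed

lemma zero_sum_sgn_third:
  fixes x y z :: "'a::linordered_idom"
  assumes "x + y + z = 0" "sgn x = sgn y" "sgn x \<noteq> 0"
  shows "sgn z = - sgn x"
  using assms by (auto simp: sgn_if split: if_splits)

locale bracket_function =
  fixes B :: "'v::linorder \<Rightarrow> 'v \<Rightarrow> 'v \<Rightarrow> 'v \<Rightarrow> 'v \<Rightarrow> real"
  assumes swap12: "B a b c d e = - B b a c d e"
    and swap23: "B a b c d e = - B a c b d e"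
    and swap34: "B a b c d e = - B a b d c e"
    and swap45: "B a b c d e = - B a b c e d"
    and grassmann_pluecker:
      "B x y z a b * B x y z c d - B x y z a c * B x y z b d + B x y z a d * B x y z b c = 0"
begin

text \<open>Used as simplification rules, these sort the arguments of a bracket increasingly.\<close>

lemma sort_args:
  "b < a \<Longrightarrow> B a b c d e = - B b a c d e"
  "c < b \<Longrightarrow> B a b c d e = - B a c b d e"
  "d < c \<Longrightarrow> B a b c d e = - B a b d c e"
  "e < d \<Longrightarrow> B a b c d e = - B a b c e d"
  using swap12 swap23 swap34 swap45 by blast+

lemma grassmann_pluecker_sgn:
  assumes "sgn (B x y z a b) * sgn (B x y z c d) = sgn (B x y z a c) * sgn (B x y z d b)"
    and "sgn (B x y z a b) * sgn (B x y z c d) \<noteq> 0"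
  shows "sgn (B x y z a d) * sgn (B x y z b c) = - (sgn (B x y z a b) * sgn (B x y z c d))"
proof -
  have "B x y z a b * B x y z c d + B x y z a c * B x y z d b + B x y z a d * B x y z b c = 0"
    using grassmann_pluecker[of x y z a b c d] swap45[of x y z d b] by simp
  from zero_sum_sgn_third[OF this] assms show ?thesis
    by (simp add: sgn_mult)
qed

end

lemma orient_bracket_function: "bracket_function (\<lambda>a b c d e. orient (f a) (f b) (f c) (f d) (f e))"
  by unfold_locales (rule orient_swap orient_grassmann_pluecker)+

lemma bracket_function_uminus:
  fixes B :: "'v::linorder \<Rightarrow> 'v \<Rightarrow> 'v \<Rightarrow> 'v \<Rightarrow> 'v \<Rightarrow> real"
  assumes "bracket_function B"
  shows "bracket_function (\<lambda>a b c d e. - B a b c d e)"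
proof -
  interpret bracket_function B by fact
  show ?thesis
  proof
    fix a b c d e x y z :: 'v
    show "- B a b c d e = - (- B b a c d e)"
      using swap12[of a b c d e] by simp
    show "- B a b c d e = - (- B a c b d e)"
      using swap23[of a b c d e] by simp
    show "- B a b c d e = - (- B a b d c e)"
      using swap34[of a b c d e] by simp
    show "- B a b c d e = - (- B a b c e d)"
      using swap45[of a b c d e] by simp
    show "(- B x y z a b) * (- B x y z c d) - (- B x y z a c) * (- B x y z b d)
      + (- B x y z a d) * (- B x y z b c) = 0"
      using grassmann_pluecker[of x y z a b c d] by simp
  qed
qed

text \<open>The facets with their vertices listed increasingly, so that the simplifier decides
  membership of a sorted vertex set syntactically.\<close>

lemma Delta_facets_sorted: "Delta_facets =
    {{- 6, - 5, - 4, - 3}, {- 6, - 5, - 4, 1}, {- 6, - 5, - 3, - 2}, {- 6, - 5, - 2, - 1}, {- 6, - 5, - 1, 4}, {- 6, - 5, 1, 2},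
     {- 6, - 5, 2, 3}, {- 6, - 5, 3, 4}, {- 6, - 4, - 3, - 2}, {- 6, - 4, - 2, - 1}, {- 6, - 4, - 1, 3}, {- 6, - 4, 1, 2},
     {- 6, - 4, 2, 3}, {- 6, - 1, 3, 5}, {- 6, - 1, 4, 5}, {- 6, 3, 4, 5}, {- 5, - 4, - 3, 6}, {- 5, - 4, 1, 6},
     {- 5, - 3, - 2, - 1}, {- 5, - 3, - 1, 2}, {- 5, - 3, 1, 2}, {- 5, - 3, 1, 6}, {- 5, - 1, 2, 4}, {- 5, 2, 3, 4},
     {- 4, - 3, - 2, 5}, {- 4, - 3, 5, 6}, {- 4, - 2, - 1, 3}, {- 4, - 2, 1, 3}, {- 4, - 2, 1, 5}, {- 4, 1, 2, 3},
     {- 4, 1, 5, 6}, {- 3, - 2, - 1, 4}, {- 3, - 2, 4, 6}, {- 3, - 2, 5, 6}, {- 3, - 1, 2, 4}, {- 3, 1, 2, 4},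
     {- 3, 1, 4, 6}, {- 2, - 1, 3, 5}, {- 2, - 1, 4, 6}, {- 2, - 1, 5, 6}, {- 2, 1, 3, 5}, {- 1, 4, 5, 6},
     {1, 2, 3, 5}, {1, 2, 4, 6}, {1, 2, 5, 6}, {2, 3, 4, 6}, {2, 3, 5, 6}, {3, 4, 5, 6}}"
  unfolding Delta_facets_def Delta_base_def by (simp add: insert_commute)

lemma Delta_facet_card: "F \<in> Delta_facets \<Longrightarrow> card F = 4"
  unfolding Delta_facets_sorted by auto

lemma Delta_simplicial_realization:
  fixes P :: "'a::euclidean_space set"
  assumes "simplicial_polytope P" "boundary_complex_iso Delta_vertices Delta_faces P"
  obtains f where "simplicial_realization P f Delta_vertices Delta_facets"
proof -
  obtain f where "bij_betw f Delta_vertices {v. v extreme_point_of P}"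
    and "\<forall>S. S \<subseteq> Delta_vertices \<longrightarrow>
      (S \<in> Delta_faces \<longleftrightarrow> (\<exists>F. F face_of P \<and> F \<noteq> P \<and> f ` S = {v. v extreme_point_of F}))"
    using assms(2) by (auto simp: boundary_complex_iso_def)
  moreover have "F = F'" if "F \<in> Delta_facets" "F' \<in> Delta_facets" "F \<subseteq> F'" for F F'
    using that Delta_facet_card by (metis card_subset_eq card.infinite zero_neq_numeral)
  moreover have "F \<subseteq> Delta_vertices" if "F \<in> Delta_facets" for F
    using that unfolding Delta_facets_sorted Delta_vertices_def by auto
  moreover have "{} \<notin> Delta_facets"
    using Delta_facet_card by fastforce
  ultimately have "simplicial_realization P f Delta_vertices Delta_facets"
    using assms(1) by unfold_locales (auto simp: Delta_faces_def)
  then show ?thesis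
    using that by blast
qed

definition Delta_facet_sides :: "(int \<Rightarrow> int \<Rightarrow> int \<Rightarrow> int \<Rightarrow> int \<Rightarrow> real) \<Rightarrow> bool" where
  "Delta_facet_sides B \<longleftrightarrow> (\<forall>i1 i2 i3 i4 j k. {i1, i2, i3, i4} \<in> Delta_facets \<longrightarrow>
     j \<in> Delta_vertices - {i1, i2, i3, i4} \<longrightarrow> k \<in> Delta_vertices - {i1, i2, i3, i4} \<longrightarrow>
     0 < B i1 i2 i3 i4 j * B i1 i2 i3 i4 k)"

lemma Delta_facet_sides_uminus:
  "Delta_facet_sides B \<Longrightarrow> Delta_facet_sides (\<lambda>a b c d e. - B a b c d e)"
  by (simp add: Delta_facet_sides_def)

lemma Delta_facet_sides_sgn:
  assumes "Delta_facet_sides B" "{i1, i2, i3, i4} \<in> Delta_facets"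
    "j \<in> Delta_vertices - {i1, i2, i3, i4}" "k \<in> Delta_vertices - {i1, i2, i3, i4}"
  shows "sgn (B i1 i2 i3 i4 k) = sgn (B i1 i2 i3 i4 j)"
proof -
  have "0 < B i1 i2 i3 i4 j * B i1 i2 i3 i4 k"
    using assms unfolding Delta_facet_sides_def by blast
  then show ?thesis
    by (auto simp: zero_less_mult_iff)
qed

lemma orient_Delta_facet_sides:
  fixes P :: "(real^4) set"
  assumes "simplicial_realization P f Delta_vertices Delta_facets"
  shows "Delta_facet_sides (\<lambda>a b c d e. orient (f a) (f b) (f c) (f d) (f e))"
  unfolding Delta_facet_sides_def using orient_facet_same_side[OF assms] Delta_facet_card by blast

text \<open>A sign certificate, found by computer: each step fixes the sign of one bracket, either
  by a facet condition or by a Grassmann-Pluecker relation two of whose terms are known to have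
  the same sign; the last relation has all three terms of the same sign.\<close>

lemma Delta_brackets_nonpos:
  assumes "bracket_function B" and sides: "Delta_facet_sides B"
  shows "\<not> 0 < B 1 2 3 5 6"
proof
  interpret bracket_function B by fact
  note sort_args [simp] Delta_facets_sorted [simp] Delta_vertices_def [simp]
  note facet = Delta_facet_sides_sgn[OF sides]
  assume "0 < B 1 2 3 5 6"
  then have [simp]: "sgn (B 1 2 3 5 6) = 1"
    by simp
  have [simp]: "sgn (B (-4) 1 2 3 5) = 1"
    using facet[of 1 2 3 5 6 "-4"] by simp
  have [simp]: "sgn (B (-2) 1 2 3 5) = 1"
    using facet[of 1 2 3 5 6 "-2"] by simp
  have [simp]: "sgn (B 1 2 4 5 6) = 1"
    using facet[of 1 2 5 6 3 4] by simp
  have [simp]: "sgn (B 2 3 4 5 6) = 1"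
    using facet[of 2 3 5 6 1 4] by simp
  have [simp]: "sgn (B (-6) 3 4 5 6) = 1"
    using facet[of 3 4 5 6 2 "-6"] by simp
  have [simp]: "sgn (B (-1) 3 4 5 6) = 1"
    using facet[of 3 4 5 6 2 "-1"] by simp
  have [simp]: "sgn (B (-6) (-1) 3 4 5) = -1"
    using facet[of "-6" 3 4 5 6 "-1"] by simp
  have [simp]: "sgn (B (-6) (-4) 1 2 3) = 1"
    using facet[of "-4" 1 2 3 5 "-6"] by simp
  have [simp]: "sgn (B (-4) (-2) 1 3 5) = 1"
    using facet[of "-2" 1 3 5 2 "-4"] by simp
  have [simp]: "sgn (B (-2) (-1) 4 5 6) = -1"
    using facet[of "-1" 4 5 6 3 "-2"] by simp
  have [simp]: "sgn (B (-3) 1 2 4 6) = -1"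
    using facet[of 1 2 4 6 5 "-3"] by simp
  have [simp]: "sgn (B (-6) (-4) (-2) 1 2) = 1"
    using facet[of "-6" "-4" 1 2 3 "-2"] by simp
  have [simp]: "sgn (B (-6) (-4) (-1) 1 2) = 1"
    using facet[of "-6" "-4" 1 2 3 "-1"] by simp
  have [simp]: "sgn (B (-6) (-4) 1 2 5) = 1"
    using facet[of "-6" "-4" 1 2 3 5] by simp
  have [simp]: "sgn (B (-6) (-4) (-1) 3 5) = -1"
    using facet[of "-6" "-1" 3 5 4 "-4"] by simp
  have [simp]: "sgn (B (-6) (-5) (-1) 4 5) = 1"
    using facet[of "-6" "-1" 4 5 3 "-5"] by simp
  have [simp]: "sgn (B (-6) (-4) (-1) 4 5) = 1"
    using facet[of "-6" "-1" 4 5 3 "-4"] by simp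
  have [simp]: "sgn (B (-6) (-4) (-2) 1 5) = -1"
    using facet[of "-4" "-2" 1 5 3 "-6"] by simp
  have [simp]: "sgn (B (-3) (-1) 1 2 4) = 1"
    using facet[of "-3" 1 2 4 6 "-1"] by simp
  have [simp]: "sgn (B (-3) (-2) (-1) 4 6) = 1"
    using facet[of "-2" "-1" 4 6 5 "-3"] by simp
  have [simp]: "sgn (B (-6) (-5) (-4) (-1) 4) = 1"
    using facet[of "-6" "-5" "-1" 4 5 "-4"] by simp
  have [simp]: "sgn (B (-6) (-5) (-3) (-1) 4) = 1"
    using facet[of "-6" "-5" "-1" 4 5 "-3"] by simp
  have [simp]: "sgn (B (-6) (-5) (-2) (-1) 4) = 1"
    using facet[of "-6" "-5" "-1" 4 5 "-2"] by simp
  have [simp]: "sgn (B (-6) (-5) (-1) 2 4) = -1"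
    using facet[of "-6" "-5" "-1" 4 5 2] by simp
  have [simp]: "sgn (B (-6) (-4) (-2) (-1) 3) = -1"
    using facet[of "-6" "-4" "-1" 3 5 "-2"] by simp
  have [simp]: "sgn (B (-6) (-3) (-2) (-1) 4) = 1"
    using facet[of "-3" "-2" "-1" 4 6 "-6"] by simp
  have [simp]: "sgn (B (-6) (-3) (-1) 2 4) = 1"
    using facet[of "-3" "-1" 2 4 1 "-6"] by simp
  have [simp]: "sgn (B (-6) (-4) (-2) (-1) 1) = -1"
    using facet[of "-6" "-4" "-2" "-1" 3 1] by simp
  have [simp]: "sgn (B (-6) (-4) (-2) (-1) 2) = -1"
    using facet[of "-6" "-4" "-2" "-1" 3 2] by simp
  have [simp]: "sgn (B (-6) (-4) (-2) (-1) 4) = -1"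
    using facet[of "-6" "-4" "-2" "-1" 3 4] by simp
  have [simp]: "sgn (B (-6) (-4) (-2) (-1) 5) = -1"
    using facet[of "-6" "-4" "-2" "-1" 3 5] by simp
  have [simp]: "sgn (B (-6) (-4) (-3) (-1) 4) = -1"
    using grassmann_pluecker_sgn[of "-6" "-1" 4 "-5" "-4" "-3" "-2"] by simp
  have [simp]: "sgn (B (-6) (-4) (-1) 2 4) = 1"
    using grassmann_pluecker_sgn[of "-6" "-1" 4 "-5" 2 "-4" "-3"] by simp
  have [simp]: "sgn (B (-6) (-4) (-2) 2 5) = -1"
    using grassmann_pluecker_sgn[of "-6" "-4" "-2" "-1" 2 5 1] by simp
  have [simp]: "sgn (B (-6) (-4) (-1) 2 5) = -1"
    using grassmann_pluecker_sgn[of "-6" "-4" 2 "-2" 5 "-1" 1] by simp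
  show False
    using grassmann_pluecker_sgn[of "-6" "-4" "-1" "-2" 2 4 5] by simp
qed

lemma no_Delta_brackets:
  assumes "bracket_function B" "Delta_facet_sides B"
  shows False
proof -
  have "0 < B 1 2 3 5 6 * B 1 2 3 5 6"
    using assms(2) by (simp add: Delta_facet_sides_def Delta_facets_sorted Delta_vertices_def)
  moreover have "\<not> 0 < B 1 2 3 5 6" "\<not> 0 < - B 1 2 3 5 6"
    using Delta_brackets_nonpos[OF assms]
      Delta_brackets_nonpos[OF bracket_function_uminus Delta_facet_sides_uminus, OF assms]
    by simp_all
  ultimately show False
    by (simp add: zero_less_mult_iff)
qed

theorem mainTheorem1:
  shows "\<not> (\<exists>P :: (real^4) set. simplicial_polytope P \<and> aff_dim P = 4 \<and>
                 boundary_complex_iso Delta_vertices Delta_faces P)"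
proof
  assume "\<exists>P :: (real^4) set. simplicial_polytope P \<and> aff_dim P = 4 \<and>
                 boundary_complex_iso Delta_vertices Delta_faces P"
  then obtain P :: "(real^4) set" where "simplicial_polytope P"
    and "boundary_complex_iso Delta_vertices Delta_faces P"
    by blast
  then obtain f where "simplicial_realization P f Delta_vertices Delta_facets"
    by (rule Delta_simplicial_realization)
  then show False
    using no_Delta_brackets[OF orient_bracket_function orient_Delta_facet_sides] by blast
qed

end
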